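(* Let $\alpha\in\mathbb{R}$, let $\kappa\in\mathbb{N}_0\cup\{\infty\}$ and let $(s_j)_{j=0}^{\kappa}$ be a sequence of Hermitian complex $q\times q$ matrices. Let $\mathcal{G}$ be a subset of $\mathbb{C}$ with $\mathcal{G}\setminus\mathbb{R}\ne\emptyset$. Further, let $f\colon\mathcal{G}\to\mathbb{C}^{q\times q}$ be a matrix-valued function, let $\mathcal{G}^\vee:=\{z\in\mathbb{C}:\bar z\in\mathcal{G}\}$, and let $f^\vee\colon\mathcal{G}^\vee\to\mathbb{C}^{q\times q}$ be defined by $f^\vee(z):=f^*(\bar z)$. For each $k\in\{-1,0,\dots,\kappa\}$ and each $z\in\mathcal{G}^\vee\setminus\mathbb{R}$, there is a complex $(m_k+2)q\times(m_k+2)q$ matrix $X_k(z)$ such that $P_k^{[f^\vee]}(z)=X_k(z)P_k^{[f]}(\bar z)X_k^*(z)$.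
   Context: Here $m_{-1}$ is understood so that $P_{-1}$ is $q\times q$ (i.e. $(m_{-1}+2)q=q$), and $m_{2k}:=k$, $m_{2k+1}:=k$ for $k\in\mathbb{N}_0$. Notation: $s_{-1}:=0$, $s_{\alpha\triangleright j}:=-\alpha s_j+s_{j+1}$, $H_n:=[s_{j+k}]_{j,k=0}^n$, $H_{\alpha\triangleright n}:=[s_{\alpha\triangleright j+k}]_{j,k=0}^n$, $y_{0,n}:=\operatorname{col}(s_j)_{j=0}^n$, $u_n:=-\operatorname{col}(s_{j-1})_{j=0}^n$, $T_{q,n}:=[\delta_{j,k+1}I_q]_{j,k=0}^n$, $v_{q,n}:=\operatorname{col}(\delta_{j,0}I_q)_{j=0}^n$, $R_{T_{q,n}}(z):=(I_{(n+1)q}-zT_{q,n})^{-1}$. For $z\in\mathcal{G}\setminus\mathbb{R}$: $P_{2n}^{[f]}(z):=\begin{bmatrix}H_n & R_{T_{q,n}}(z)[v_{q,n}f(z)-u_n]\\ (R_{T_{q,n}}(z)[v_{q,n}f(z)-u_n])^* & \frac{f(z)-f^*(z)}{z-\bar z}\end{bmatrix}$ for $2n\le\kappa$; $P_{2n+1}^{[f]}(z):=\begin{bmatrix}H_{\alpha\triangleright n} & B(z)\\ B(z)^* & \frac{(z-\alpha)f(z)-[(z-\alpha)f(z)]^*}{z-\bar z}\end{bmatrix}$ with $B(z):=R_{T_{q,n}}(z)(v_{q,n}(z-\alpha)f(z)-(-\alpha u_n-y_{0,n}))$ for $2n+1\le\kappa$; and $P_{-1}^{[f]}(z):=\frac{(z-\alpha)f(z)-[(z-\alpha)f(z)]^*}{z-\bar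 z}$. *)

theory Defs
  imports "Jordan_Normal_Form.Schur_Decomposition" "Jordan_Normal_Form.Gauss_Jordan_Elimination"
    "HOL-Library.Extended_Nat"
begin

definition blockmat :: "nat \<Rightarrow> nat \<Rightarrow> nat \<Rightarrow> (nat \<Rightarrow> nat \<Rightarrow> complex mat) \<Rightarrow> complex mat" where
  "blockmat r c q B = mat (r*q) (c*q) (\<lambda>(i,j). B (i div q) (j div q) $$ (i mod q, j mod q))"

definition Hmat :: "nat \<Rightarrow> (nat \<Rightarrow> complex mat) \<Rightarrow> nat \<Rightarrow> complex mat" where
  "Hmat q s n = blockmat (n+1) (n+1) q (\<lambda>j k. s (j+k))"

definition salpha :: "real \<Rightarrow> (nat \<Rightarrow> complex mat) \<Rightarrow> nat \<Rightarrow> complex mat" where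
  "salpha \<alpha> s j = (- complex_of_real \<alpha>) \<cdot>\<^sub>m s j + s (j+1)"

definition Halpha :: "nat \<Rightarrow> real \<Rightarrow> (nat \<Rightarrow> complex mat) \<Rightarrow> nat \<Rightarrow> complex mat" where
  "Halpha q \<alpha> s n = blockmat (n+1) (n+1) q (\<lambda>j k. salpha \<alpha> s (j+k))"

definition y0 :: "nat \<Rightarrow> (nat \<Rightarrow> complex mat) \<Rightarrow> nat \<Rightarrow> complex mat" where
  "y0 q s n = blockmat (n+1) 1 q (\<lambda>j _. s j)"

definition sprev :: "nat \<Rightarrow> (nat \<Rightarrow> complex mat) \<Rightarrow> nat \<Rightarrow> complex mat" where
  "sprev q s j = (if j = 0 then 0\<^sub>m q q else s (j - 1))"

definition umat :: "nat \<Rightarrow> (nat \<Rightarrow> complex mat) \<Rightarrow> nat \<Rightarrow> complex mat" where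
  "umat q s n = blockmat (n+1) 1 q (\<lambda>j _. - sprev q s j)"

definition Tmat :: "nat \<Rightarrow> nat \<Rightarrow> complex mat" where
  "Tmat q n = blockmat (n+1) (n+1) q (\<lambda>j k. if j = k+1 then 1\<^sub>m q else 0\<^sub>m q q)"

definition vmat :: "nat \<Rightarrow> nat \<Rightarrow> complex mat" where
  "vmat q n = blockmat (n+1) 1 q (\<lambda>j _. if j = 0 then 1\<^sub>m q else 0\<^sub>m q q)"

definition RT :: "nat \<Rightarrow> nat \<Rightarrow> complex \<Rightarrow> complex mat" where
  "RT q n z = the (mat_inverse (1\<^sub>m ((n+1)*q) - z \<cdot>\<^sub>m Tmat q n))"

(* size (m_k + 2) q of P_k, with m_{2n} = m_{2n+1} = n and (m_{-1}+2) q = q *)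
definition dimP :: "nat \<Rightarrow> int \<Rightarrow> nat" where
  "dimP q k = (if k = -1 then q else (nat k div 2 + 2) * q)"

definition Pmat :: "nat \<Rightarrow> real \<Rightarrow> (nat \<Rightarrow> complex mat) \<Rightarrow> (complex \<Rightarrow> complex mat)
    \<Rightarrow> int \<Rightarrow> complex \<Rightarrow> complex mat" where
  "Pmat q \<alpha> s f k z =
    (if k = -1 then
       (1 / (z - cnj z)) \<cdot>\<^sub>m ((z - complex_of_real \<alpha>) \<cdot>\<^sub>m f z - mat_adjoint ((z - complex_of_real \<alpha>) \<cdot>\<^sub>m f z))
     else if even k then
       (let n = nat k div 2;
            B = RT q n z * (vmat q n * f z - umat q s n)
        in four_block_mat (Hmat q s n) B (mat_adjoint B)
             ((1 / (z - cnj z)) \<cdot>\<^sub>m (f z - mat_adjoint (f z))))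
     else
       (let n = nat k div 2;
            B = RT q n z * (vmat q n * ((z - complex_of_real \<alpha>) \<cdot>\<^sub>m f z)
                   - ((- complex_of_real \<alpha>) \<cdot>\<^sub>m umat q s n - y0 q s n))
        in four_block_mat (Halpha q \<alpha> s n) B (mat_adjoint B)
             ((1 / (z - cnj z)) \<cdot>\<^sub>m ((z - complex_of_real \<alpha>) \<cdot>\<^sub>m f z
                 - mat_adjoint ((z - complex_of_real \<alpha>) \<cdot>\<^sub>m f z)))))"

definition Gvee :: "complex set \<Rightarrow> complex set" where
  "Gvee G = {z. cnj z \<in> G}"

definition fvee :: "(complex \<Rightarrow> complex mat) \<Rightarrow> complex \<Rightarrow> complex mat" where
  "fvee f z = mat_adjoint (f (cnj z))"

end

theory Submission
  imports Defs
begin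

(* Write P as the block matrix [[H, B], [B^H, (a - a^H) / (z - cnj z)]] with
   B = R(z) (v a - u) and R(z) = (I - z T)^{-1}.  Passing from f at cnj z to f^vee at z
   replaces a by a^H.  The block Hankel matrix H satisfies the Lyapunov identity
   T H - H T^H = v u^H - u v^H, and the congruence by
   X = [[R(z) (I - cnj z T), (z - cnj z) R(z) v], [0, I]] maps P^[f](cnj z) to P^[f^vee](z):
   the off-diagonal block transforms correctly because (I - cnj z T) R(cnj z) = I, and the
   top-left block stays H because
   (I - z T) H (I - z T)^H - (I - cnj z T) H (I - cnj z T)^H = -(z - cnj z) (T H - H T^H),
   which the Lyapunov identity turns into exactly the correction terms coming from the
   off-diagonal blocks.  For k = -1 the two matrices coincide and X = I. *)

section \<open>Adjoints and congruences\<close>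

declare minus_carrier_mat [simp]

lemma dim_row_mat_adjoint [simp]: "dim_row (mat_adjoint A) = dim_col A"
  and dim_col_mat_adjoint [simp]: "dim_col (mat_adjoint A) = dim_row A"
  unfolding mat_adjoint_def by auto

lemma mat_adjoint_carrier_iff [simp]: "mat_adjoint A \<in> carrier_mat m n \<longleftrightarrow> A \<in> carrier_mat n m"
  unfolding carrier_mat_def by auto

lemma index_mat_adjoint [simp]:
  fixes A :: "complex mat"
  shows "i < dim_col A \<Longrightarrow> j < dim_row A \<Longrightarrow> mat_adjoint A $$ (i, j) = cnj (A $$ (j, i))"
  unfolding mat_adjoint_def by (simp add: mat_of_rows_def)

lemma mat_adjoint_adjoint [simp]: "mat_adjoint (mat_adjoint A) = (A :: complex mat)"
  by (rule eq_matI) auto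

lemma mat_adjoint_mult:
  "A \<in> carrier_mat n m \<Longrightarrow> B \<in> carrier_mat m p \<Longrightarrow>
   mat_adjoint (A * B) = mat_adjoint B * mat_adjoint (A :: complex mat)"
  by (rule eq_matI) (auto simp: scalar_prod_def mult.commute)

lemma mat_adjoint_add:
  "A \<in> carrier_mat n m \<Longrightarrow> B \<in> carrier_mat n m \<Longrightarrow>
   mat_adjoint (A + B) = mat_adjoint A + mat_adjoint (B :: complex mat)"
  by (rule eq_matI) auto

lemma mat_adjoint_minus:
  "A \<in> carrier_mat n m \<Longrightarrow> B \<in> carrier_mat n m \<Longrightarrow>
   mat_adjoint (A - B) = mat_adjoint A - mat_adjoint (B :: complex mat)"
  by (rule eq_matI) auto

lemma mat_adjoint_smult: "mat_adjoint (c \<cdot>\<^sub>m A) = cnj c \<cdot>\<^sub>m mat_adjoint (A :: complex mat)"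
  by (rule eq_matI) auto

lemma mat_adjoint_one [simp]: "mat_adjoint (1\<^sub>m n :: complex mat) = 1\<^sub>m n"
  by (rule eq_matI) auto

lemma mat_adjoint_zero [simp]: "mat_adjoint (0\<^sub>m n m :: complex mat) = 0\<^sub>m m n"
  by (rule eq_matI) auto

lemma mat_adjoint_four_block_mat:
  fixes A B C D :: "complex mat"
  assumes "A \<in> carrier_mat n1 m1" "B \<in> carrier_mat n1 m2" "C \<in> carrier_mat n2 m1" "D \<in> carrier_mat n2 m2"
  shows "mat_adjoint (four_block_mat A B C D)
    = four_block_mat (mat_adjoint A) (mat_adjoint C) (mat_adjoint B) (mat_adjoint D)"
  by (rule eq_matI) (use assms in \<open>auto simp: four_block_mat_def\<close>)

lemma hermitian_index_cnj:
  fixes A :: "complex mat"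
  assumes "mat_adjoint A = A" "A \<in> carrier_mat n n" "i < n" "j < n"
  shows "cnj (A $$ (i, j)) = A $$ (j, i)"
  by (metis assms index_mat_adjoint carrier_matD)

lemma mult_mult_adjoint_congruence:
  fixes R x y :: "complex mat"
  assumes R: "R \<in> carrier_mat n n" and x: "x \<in> carrier_mat n m" and y: "y \<in> carrier_mat n m"
  shows "R * x * mat_adjoint (R * y) = R * (x * mat_adjoint y) * mat_adjoint R"
proof -
  have yR: "mat_adjoint y * mat_adjoint R \<in> carrier_mat m n" using R y by simp
  have "R * x * mat_adjoint (R * y) = R * (x * (mat_adjoint y * mat_adjoint R))"
    using R x yR by (simp add: mat_adjoint_mult[OF R y])
  also have "\<dots> = R * (x * mat_adjoint y) * mat_adjoint R"
    using R x y by (simp add: assoc_mult_mat[of x n m _ n _ n] assoc_mult_mat[of R n n _ n _ n])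
  finally show ?thesis .
qed

lemma add_mult_adjoint_congruence:
  fixes R X Y :: "complex mat"
  assumes R: "R \<in> carrier_mat n n" and X: "X \<in> carrier_mat n n" and Y: "Y \<in> carrier_mat n n"
  shows "R * X * mat_adjoint R + R * Y * mat_adjoint R = R * (X + Y) * mat_adjoint R"
proof -
  have aR: "mat_adjoint R \<in> carrier_mat n n" using R by simp
  show ?thesis
    by (simp only: mult_add_distrib_mat[OF R X Y]
        add_mult_distrib_mat[OF mult_carrier_mat[OF R X] mult_carrier_mat[OF R Y] aR])
qed

lemma left_inverse_congruence:
  fixes R E H :: "complex mat"
  assumes R: "R \<in> carrier_mat n n" and E: "E \<in> carrier_mat n n" and H: "H \<in> carrier_mat n n"
    and inverse: "R * E = 1\<^sub>m n"
  shows "R * (E * H * mat_adjoint E) * mat_adjoint R = H"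
proof -
  have "R * (E * H * mat_adjoint E) * mat_adjoint R = R * (E * H) * mat_adjoint (R * E)"
    using mult_mult_adjoint_congruence[OF R mult_carrier_mat[OF E H] E] by simp
  also have "R * (E * H) = H"
    using R E H by (simp add: assoc_mult_mat[OF R E H, symmetric] inverse)
  finally show ?thesis using H by (simp add: inverse)
qed

lemma mult_right_inverse_cancel:
  fixes R M R' W :: "complex mat"
  assumes R: "R \<in> carrier_mat n n" and M: "M \<in> carrier_mat n n" and R': "R' \<in> carrier_mat n n"
    and W: "W \<in> carrier_mat n m" and inverse: "M * R' = 1\<^sub>m n"
  shows "R * M * (R' * W) = R * W"
proof -
  have "M * (R' * W) = W"
    using M R' W by (simp add: assoc_mult_mat[OF M R' W, symmetric] inverse)
  then show ?thesis by (simp only: assoc_mult_mat[OF R M mult_carrier_mat[OF R' W]])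
qed

lemma four_block_unit_upper_congruence:
  fixes A D H B C :: "complex mat"
  assumes A: "A \<in> carrier_mat n n" and D: "D \<in> carrier_mat n m"
    and H: "H \<in> carrier_mat n n" and B: "B \<in> carrier_mat n m" and C: "C \<in> carrier_mat m m"
    and C_hermitian: "mat_adjoint C = C"
  shows "four_block_mat A D (0\<^sub>m m n) (1\<^sub>m m) * four_block_mat H B (mat_adjoint B) C
        * mat_adjoint (four_block_mat A D (0\<^sub>m m n) (1\<^sub>m m))
    = four_block_mat (A * H * mat_adjoint A + D * mat_adjoint (A * B) + (A * B + D * C) * mat_adjoint D)
        (A * B + D * C) (mat_adjoint (A * B + D * C)) C"
proof -
  have Z: "0\<^sub>m m n \<in> carrier_mat m n" and Z': "0\<^sub>m n m \<in> carrier_mat n m" and I: "1\<^sub>m m \<in> carrier_mat m m"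
    by auto
  have aA: "mat_adjoint A \<in> carrier_mat n n" and aB: "mat_adjoint B \<in> carrier_mat m n"
    and aD: "mat_adjoint D \<in> carrier_mat m n" using A B D by auto
  have AHDB: "A * H + D * mat_adjoint B \<in> carrier_mat n n" and ABDC: "A * B + D * C \<in> carrier_mat n m"
    using A B C D H by auto
  have "four_block_mat A D (0\<^sub>m m n) (1\<^sub>m m) * four_block_mat H B (mat_adjoint B) C
      = four_block_mat (A * H + D * mat_adjoint B) (A * B + D * C) (mat_adjoint B) C"
    using assms aB by (simp add: mult_four_block_mat[OF A D Z I H B aB C])
  moreover have "mat_adjoint (four_block_mat A D (0\<^sub>m m n) (1\<^sub>m m))
      = four_block_mat (mat_adjoint A) (0\<^sub>m n m) (mat_adjoint D) (1\<^sub>m m)"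
    by (simp add: mat_adjoint_four_block_mat[OF A D Z I])
  moreover have "(A * H + D * mat_adjoint B) * mat_adjoint A = A * H * mat_adjoint A + D * mat_adjoint (A * B)"
    using A B D H aA aB by (simp add: add_mult_distrib_mat[of _ n n] mat_adjoint_mult[OF A B])
  moreover have "mat_adjoint B * mat_adjoint A + C * mat_adjoint D = mat_adjoint (A * B + D * C)"
    using A B C D C_hermitian
    by (simp add: mat_adjoint_add[of _ n m] mat_adjoint_mult[OF A B] mat_adjoint_mult[OF D C])
  ultimately show ?thesis
    using AHDB ABDC aB C aA aD by (simp add: mult_four_block_mat[OF AHDB ABDC aB C aA Z' aD I])
qed

lemma one_minus_smult_congruence:
  fixes T H :: "complex mat"
  assumes T: "T \<in> carrier_mat n n" and H: "H \<in> carrier_mat n n"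
  shows "(1\<^sub>m n - w \<cdot>\<^sub>m T) * H * mat_adjoint (1\<^sub>m n - w \<cdot>\<^sub>m T)
    = H - w \<cdot>\<^sub>m (T * H) - cnj w \<cdot>\<^sub>m (H * mat_adjoint T) + (w * cnj w) \<cdot>\<^sub>m (T * H * mat_adjoint T)"
proof -
  have aT: "mat_adjoint T \<in> carrier_mat n n" using T by simp
  have left: "(1\<^sub>m n - w \<cdot>\<^sub>m T) * H = H - w \<cdot>\<^sub>m (T * H)"
    using T H by (simp add: minus_mult_distrib_mat[of _ n n] mult_smult_assoc_mat[OF T H])
  have adj: "mat_adjoint (1\<^sub>m n - w \<cdot>\<^sub>m T) = 1\<^sub>m n - cnj w \<cdot>\<^sub>m mat_adjoint T"
    using T by (simp add: mat_adjoint_minus[of _ n n] mat_adjoint_smult)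
  have K: "H - w \<cdot>\<^sub>m (T * H) \<in> carrier_mat n n" and wT: "cnj w \<cdot>\<^sub>m mat_adjoint T \<in> carrier_mat n n"
    and wTH: "w \<cdot>\<^sub>m (T * H) \<in> carrier_mat n n" using T H by auto
  have "(H - w \<cdot>\<^sub>m (T * H)) * (1\<^sub>m n - cnj w \<cdot>\<^sub>m mat_adjoint T)
      = H - w \<cdot>\<^sub>m (T * H) - cnj w \<cdot>\<^sub>m ((H - w \<cdot>\<^sub>m (T * H)) * mat_adjoint T)"
    using K aT by (simp add: mult_minus_distrib_mat[OF K one_carrier_mat wT] mult_smult_distrib[OF K aT] right_mult_one_mat[OF K])
  also have "(H - w \<cdot>\<^sub>m (T * H)) * mat_adjoint T = H * mat_adjoint T - w \<cdot>\<^sub>m (T * H * mat_adjoint T)"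
    using T H aT by (simp add: minus_mult_distrib_mat[OF H wTH aT] mult_smult_assoc_mat[of "T * H" n n])
  finally have right: "(H - w \<cdot>\<^sub>m (T * H)) * (1\<^sub>m n - cnj w \<cdot>\<^sub>m mat_adjoint T)
      = H - w \<cdot>\<^sub>m (T * H) - cnj w \<cdot>\<^sub>m (H * mat_adjoint T - w \<cdot>\<^sub>m (T * H * mat_adjoint T))" .
  show ?thesis
    unfolding left adj right using T H by (auto intro!: eq_matI simp: algebra_simps)
qed

lemma one_minus_smult_congruence_cnj:
  fixes T H :: "complex mat"
  assumes T: "T \<in> carrier_mat n n" and H: "H \<in> carrier_mat n n"
  shows "(1\<^sub>m n - z \<cdot>\<^sub>m T) * H * mat_adjoint (1\<^sub>m n - z \<cdot>\<^sub>m T)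
    = (1\<^sub>m n - cnj z \<cdot>\<^sub>m T) * H * mat_adjoint (1\<^sub>m n - cnj z \<cdot>\<^sub>m T)
      - (z - cnj z) \<cdot>\<^sub>m (T * H - H * mat_adjoint T)"
  unfolding one_minus_smult_congruence[OF T H]
  using T H by (auto intro!: eq_matI simp: algebra_simps)

lemma one_minus_smult_congruence_lyapunov:
  fixes T H v u a :: "complex mat"
  assumes T: "T \<in> carrier_mat n n" and H: "H \<in> carrier_mat n n"
    and v: "v \<in> carrier_mat n m" and u: "u \<in> carrier_mat n m" and a: "a \<in> carrier_mat m m"
    and lyapunov: "T * H - H * mat_adjoint T = v * mat_adjoint u - u * mat_adjoint v"
  shows "(1\<^sub>m n - cnj z \<cdot>\<^sub>m T) * H * mat_adjoint (1\<^sub>m n - cnj z \<cdot>\<^sub>m T)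
      + ((z - cnj z) \<cdot>\<^sub>m v) * mat_adjoint (v * a - u) + (v * mat_adjoint a - u) * mat_adjoint ((z - cnj z) \<cdot>\<^sub>m v)
    = (1\<^sub>m n - z \<cdot>\<^sub>m T) * H * mat_adjoint (1\<^sub>m n - z \<cdot>\<^sub>m T)"
proof -
  define c where "c = z - cnj z"
  have av: "mat_adjoint v \<in> carrier_mat m n" and au: "mat_adjoint u \<in> carrier_mat m n"
    and aa: "mat_adjoint a \<in> carrier_mat m m" and aW: "mat_adjoint (v * a - u) \<in> carrier_mat m n"
    and aav: "mat_adjoint a * mat_adjoint v \<in> carrier_mat m n"
    and vaa: "v * mat_adjoint a \<in> carrier_mat n m" and W': "v * mat_adjoint a - u \<in> carrier_mat n m"
    using v u a by auto
  have "mat_adjoint (v * a - u) = mat_adjoint a * mat_adjoint v - mat_adjoint u"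
    using v u a by (simp add: mat_adjoint_minus[of _ n m] mat_adjoint_mult[OF v a])
  then have "v * mat_adjoint (v * a - u) = v * mat_adjoint a * mat_adjoint v - v * mat_adjoint u"
    by (simp add: mult_minus_distrib_mat[OF v aav au] assoc_mult_mat[OF v aa av])
  then have "(c \<cdot>\<^sub>m v) * mat_adjoint (v * a - u)
      = c \<cdot>\<^sub>m (v * mat_adjoint a * mat_adjoint v - v * mat_adjoint u)"
    by (simp only: mult_smult_assoc_mat[OF v aW])
  moreover have "(v * mat_adjoint a - u) * mat_adjoint (c \<cdot>\<^sub>m v)
      = cnj c \<cdot>\<^sub>m (v * mat_adjoint a * mat_adjoint v - u * mat_adjoint v)"
    by (simp add: mat_adjoint_smult mult_smult_distrib[OF W' av])
      (simp add: minus_mult_distrib_mat[OF vaa u av])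
  moreover have "(1\<^sub>m n - z \<cdot>\<^sub>m T) * H * mat_adjoint (1\<^sub>m n - z \<cdot>\<^sub>m T)
      = (1\<^sub>m n - cnj z \<cdot>\<^sub>m T) * H * mat_adjoint (1\<^sub>m n - cnj z \<cdot>\<^sub>m T)
        - c \<cdot>\<^sub>m (v * mat_adjoint u - u * mat_adjoint v)"
    using one_minus_smult_congruence_cnj[OF T H, of z] unfolding c_def lyapunov .
  moreover have "cnj c = - c" by (simp add: c_def)
  ultimately show ?thesis
    unfolding c_def[symmetric] using T v u a H by (auto intro!: eq_matI simp: ring_distribs)
qed

section \<open>The conjugation congruence\<close>

(* The common shape [[H, B], [B^H, (a - a^H) / (z - cnj z)]], B = R (v a - u), of P_{2n}
   and P_{2n+1}, with R = R_T(z). *)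

definition fmi_block :: "complex mat \<Rightarrow> complex mat \<Rightarrow> complex mat \<Rightarrow> complex mat \<Rightarrow> complex mat
    \<Rightarrow> complex \<Rightarrow> complex mat" where
  "fmi_block H R v u a z = (let B = R * (v * a - u) in
     four_block_mat H B (mat_adjoint B) ((1 / (z - cnj z)) \<cdot>\<^sub>m (a - mat_adjoint a)))"

lemma conj_congruence_off_diagonal:
  fixes T v u a R1 R2 :: "complex mat"
  assumes T: "T \<in> carrier_mat n n" and v: "v \<in> carrier_mat n m" and u: "u \<in> carrier_mat n m"
    and a: "a \<in> carrier_mat m m" and R1: "R1 \<in> carrier_mat n n"
    and R2: "R2 \<in> carrier_mat n n" and R2_inv: "(1\<^sub>m n - cnj z \<cdot>\<^sub>m T) * R2 = 1\<^sub>m n"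
    and z: "z \<noteq> cnj z"
  shows "R1 * (1\<^sub>m n - cnj z \<cdot>\<^sub>m T) * (R2 * (v * a - u))
      + R1 * ((z - cnj z) \<cdot>\<^sub>m v) * ((1 / (cnj z - z)) \<cdot>\<^sub>m (a - mat_adjoint a))
    = R1 * (v * mat_adjoint a - u)"
proof -
  define M where "M = 1\<^sub>m n - cnj z \<cdot>\<^sub>m T"
  define W where "W = v * a - u"
  define W' where "W' = v * mat_adjoint a - u"
  have M: "M \<in> carrier_mat n n" and W: "W \<in> carrier_mat n m" and W': "W' \<in> carrier_mat n m"
    and aa: "a - mat_adjoint a \<in> carrier_mat m m" and cv: "(z - cnj z) \<cdot>\<^sub>m v \<in> carrier_mat n m"
    using T v u a by (auto simp: M_def W_def W'_def)
  have first: "R1 * M * (R2 * W) = R1 * W"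
    by (rule mult_right_inverse_cancel[OF R1 M R2 W R2_inv[folded M_def]])
  have "R1 * ((z - cnj z) \<cdot>\<^sub>m v) * ((1 / (cnj z - z)) \<cdot>\<^sub>m (a - mat_adjoint a))
      = R1 * (((z - cnj z) \<cdot>\<^sub>m v) * ((1 / (cnj z - z)) \<cdot>\<^sub>m (a - mat_adjoint a)))"
    by (rule assoc_mult_mat[OF R1 cv smult_carrier_mat[OF aa]])
  also have "((z - cnj z) \<cdot>\<^sub>m v) * ((1 / (cnj z - z)) \<cdot>\<^sub>m (a - mat_adjoint a))
      = (z - cnj z) \<cdot>\<^sub>m ((1 / (cnj z - z)) \<cdot>\<^sub>m (v * (a - mat_adjoint a)))"
    by (simp only: mult_smult_assoc_mat[OF v smult_carrier_mat[OF aa]] mult_smult_distrib[OF v aa])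
  also have "\<dots> = W' - W"
    using v a u z by (auto intro!: eq_matI simp: W_def W'_def mult_minus_distrib_mat[OF v a] field_simps)
  finally have "R1 * ((z - cnj z) \<cdot>\<^sub>m v) * ((1 / (cnj z - z)) \<cdot>\<^sub>m (a - mat_adjoint a)) = R1 * (W' - W)" .
  moreover have "R1 * W + R1 * (W' - W) = R1 * W'"
  proof -
    have "W + (W' - W) = W'" using W W' by (auto intro!: eq_matI)
    then show ?thesis using mult_add_distrib_mat[OF R1 W minus_carrier_mat[OF W, of W']] by simp
  qed
  ultimately show ?thesis
    unfolding M_def[symmetric] W_def[symmetric] W'_def[symmetric] first by simp
qed

lemma conj_congruence_top_left:
  fixes H T v u a R1 :: "complex mat"
  assumes H: "H \<in> carrier_mat n n" and T: "T \<in> carrier_mat n n"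
    and v: "v \<in> carrier_mat n m" and u: "u \<in> carrier_mat n m" and a: "a \<in> carrier_mat m m"
    and R1: "R1 \<in> carrier_mat n n" and R1_inv: "R1 * (1\<^sub>m n - z \<cdot>\<^sub>m T) = 1\<^sub>m n"
    and lyapunov: "T * H - H * mat_adjoint T = v * mat_adjoint u - u * mat_adjoint v"
  shows "R1 * (1\<^sub>m n - cnj z \<cdot>\<^sub>m T) * H * mat_adjoint (R1 * (1\<^sub>m n - cnj z \<cdot>\<^sub>m T))
      + R1 * ((z - cnj z) \<cdot>\<^sub>m v) * mat_adjoint (R1 * (v * a - u))
      + R1 * (v * mat_adjoint a - u) * mat_adjoint (R1 * ((z - cnj z) \<cdot>\<^sub>m v))
    = H"
proof -
  define M where "M = 1\<^sub>m n - cnj z \<cdot>\<^sub>m T"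
  define E where "E = 1\<^sub>m n - z \<cdot>\<^sub>m T"
  define cv where "cv = (z - cnj z) \<cdot>\<^sub>m v"
  define W where "W = v * a - u"
  define W' where "W' = v * mat_adjoint a - u"
  have M: "M \<in> carrier_mat n n" and E: "E \<in> carrier_mat n n" and cv: "cv \<in> carrier_mat n m"
    and W: "W \<in> carrier_mat n m" and W': "W' \<in> carrier_mat n m"
    using T v u a by (auto simp: M_def E_def cv_def W_def W'_def)
  have Y: "M * H * mat_adjoint M \<in> carrier_mat n n" "cv * mat_adjoint W \<in> carrier_mat n n"
    "W' * mat_adjoint cv \<in> carrier_mat n n" "M * H * mat_adjoint M + cv * mat_adjoint W \<in> carrier_mat n n"
    using M H W W' cv by auto
  have "R1 * M * H = R1 * (M * H)" using R1 M H by simp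
  then have "R1 * M * H * mat_adjoint (R1 * M) = R1 * (M * H * mat_adjoint M) * mat_adjoint R1"
    by (simp only: mult_mult_adjoint_congruence[OF R1 mult_carrier_mat[OF M H] M])
  then have "R1 * M * H * mat_adjoint (R1 * M) + R1 * cv * mat_adjoint (R1 * W) + R1 * W' * mat_adjoint (R1 * cv)
      = R1 * (M * H * mat_adjoint M + cv * mat_adjoint W + W' * mat_adjoint cv) * mat_adjoint R1"
    unfolding mult_mult_adjoint_congruence[OF R1 cv W] mult_mult_adjoint_congruence[OF R1 W' cv]
    by (simp only: add_mult_adjoint_congruence[OF R1 Y(1,2)] add_mult_adjoint_congruence[OF R1 Y(4,3)])
  also have "\<dots> = R1 * (E * H * mat_adjoint E) * mat_adjoint R1"
    unfolding M_def E_def cv_def W_def W'_def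
    using one_minus_smult_congruence_lyapunov[OF T H v u a lyapunov] by simp
  also have "\<dots> = H"
    by (rule left_inverse_congruence[OF R1 E H R1_inv[folded E_def]])
  finally show ?thesis unfolding M_def cv_def W_def W'_def .
qed

lemma fmi_block_conj_congruence:
  fixes H T v u a R1 R2 :: "complex mat"
  assumes H: "H \<in> carrier_mat n n" and T: "T \<in> carrier_mat n n"
    and v: "v \<in> carrier_mat n m" and u: "u \<in> carrier_mat n m" and a: "a \<in> carrier_mat m m"
    and R1: "R1 \<in> carrier_mat n n" and R1_inv: "R1 * (1\<^sub>m n - z \<cdot>\<^sub>m T) = 1\<^sub>m n"
    and R2: "R2 \<in> carrier_mat n n" and R2_inv: "(1\<^sub>m n - cnj z \<cdot>\<^sub>m T) * R2 = 1\<^sub>m n"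
    and lyapunov: "T * H - H * mat_adjoint T = v * mat_adjoint u - u * mat_adjoint v"
    and z: "z \<noteq> cnj z"
  shows "fmi_block H R1 v u (mat_adjoint a) z
    = four_block_mat (R1 * (1\<^sub>m n - cnj z \<cdot>\<^sub>m T)) (R1 * ((z - cnj z) \<cdot>\<^sub>m v)) (0\<^sub>m m n) (1\<^sub>m m)
      * fmi_block H R2 v u a (cnj z)
      * mat_adjoint (four_block_mat (R1 * (1\<^sub>m n - cnj z \<cdot>\<^sub>m T)) (R1 * ((z - cnj z) \<cdot>\<^sub>m v)) (0\<^sub>m m n) (1\<^sub>m m))"
proof -
  define C where "C = (1 / (cnj z - z)) \<cdot>\<^sub>m (a - mat_adjoint a)"
  have A: "R1 * (1\<^sub>m n - cnj z \<cdot>\<^sub>m T) \<in> carrier_mat n n" and B: "R2 * (v * a - u) \<in> carrier_mat n m"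
    and D: "R1 * ((z - cnj z) \<cdot>\<^sub>m v) \<in> carrier_mat n m" and C: "C \<in> carrier_mat m m"
    using R1 R2 T v u a by (auto simp: C_def)
  have C_alt: "(1 / (z - cnj z)) \<cdot>\<^sub>m (mat_adjoint a - a) = C"
    using a z by (auto intro!: eq_matI simp: C_def field_simps)
  have "mat_adjoint C = (1 / (z - cnj z)) \<cdot>\<^sub>m (mat_adjoint a - a)"
    using a by (simp add: C_def mat_adjoint_smult mat_adjoint_minus[of _ m m])
  then have C_hermitian: "mat_adjoint C = C" by (simp only: C_alt)
  have AB: "R1 * (1\<^sub>m n - cnj z \<cdot>\<^sub>m T) * (R2 * (v * a - u)) = R1 * (v * a - u)"
    using T v u a by (intro mult_right_inverse_cancel[OF R1 _ R2 _ R2_inv]) auto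
  show ?thesis
    using four_block_unit_upper_congruence[OF A D H B C C_hermitian]
    unfolding C_def conj_congruence_off_diagonal[OF T v u a R1 R2 R2_inv z]
    unfolding AB conj_congruence_top_left[OF H T v u a R1 R1_inv lyapunov]
    unfolding fmi_block_def Let_def
    by (simp add: C_alt[unfolded C_def])
qed

section \<open>Shift matrices and block Hankel matrices\<close>

lemma blockmat_index [simp]:
  "i < r * q \<Longrightarrow> j < c * q \<Longrightarrow> blockmat r c q B $$ (i, j) = B (i div q) (j div q) $$ (i mod q, j mod q)"
  unfolding blockmat_def by simp

lemma blockmat_carrier [simp]: "blockmat r c q B \<in> carrier_mat (r * q) (c * q)"
  unfolding blockmat_def by simp

lemma dim_blockmat [simp]:
  "dim_row (blockmat r c q B) = r * q" "dim_col (blockmat r c q B) = c * q"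
  unfolding blockmat_def by simp_all

lemma Tmat_carrier [simp]: "Tmat q n \<in> carrier_mat ((n + 1) * q) ((n + 1) * q)"
  unfolding Tmat_def by (rule blockmat_carrier)

lemma vmat_carrier [simp]: "vmat q n \<in> carrier_mat ((n + 1) * q) q"
  unfolding vmat_def using blockmat_carrier[of "n + 1" 1 q] by simp

lemma dim_Tmat [simp]: "dim_row (Tmat q n) = (n + 1) * q" "dim_col (Tmat q n) = (n + 1) * q"
  unfolding Tmat_def by simp_all

lemma dim_vmat [simp]: "dim_row (vmat q n) = (n + 1) * q" "dim_col (vmat q n) = q"
  unfolding vmat_def by simp_all

lemma Hmat_carrier: "Hmat q s n \<in> carrier_mat ((n + 1) * q) ((n + 1) * q)"
  unfolding Hmat_def by (rule blockmat_carrier)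

lemma umat_carrier: "umat q s n \<in> carrier_mat ((n + 1) * q) q"
  unfolding umat_def using blockmat_carrier[of "n + 1" 1 q] by simp

lemma Halpha_carrier: "Halpha q \<alpha> s n \<in> carrier_mat ((n + 1) * q) ((n + 1) * q)"
  unfolding Halpha_def by (rule blockmat_carrier)

lemma y0_carrier: "y0 q s n \<in> carrier_mat ((n + 1) * q) q"
  unfolding y0_def using blockmat_carrier[of "n + 1" 1 q] by simp

lemma Tmat_index:
  assumes "i < (n + 1) * q" "k < (n + 1) * q"
  shows "Tmat q n $$ (i, k) = (if k + q = i then 1 else 0)"
proof -
  have q: "0 < q" using assms by (cases q) auto
  have "(i div q = k div q + 1 \<and> i mod q = k mod q) \<longleftrightarrow> k + q = i"
    using q by (metis add.commute div_mult_mod_eq le_add2 le_div_geq le_mod_geq add_diff_cancel_left' Suc_eq_plus1)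
  then show ?thesis unfolding Tmat_def using assms q by (auto simp: one_mat_def)
qed

lemma vmat_index:
  assumes "i < (n + 1) * q" "k < q"
  shows "vmat q n $$ (i, k) = (if i = k then 1 else 0)"
  using assms unfolding vmat_def by (auto simp: one_mat_def div_eq_0_iff)

lemma Tmat_mult_index:
  assumes M: "M \<in> carrier_mat ((n + 1) * q) m" and i: "i < (n + 1) * q" and j: "j < m"
  shows "(Tmat q n * M) $$ (i, j) = (if i < q then 0 else M $$ (i - q, j))"
proof -
  have "(Tmat q n * M) $$ (i, j) = (\<Sum>k<(n + 1) * q. Tmat q n $$ (i, k) * M $$ (k, j))"
    using M i j by (simp add: scalar_prod_def atLeast0LessThan)
  also have "\<dots> = (\<Sum>k<(n + 1) * q. if k = i - q \<and> q \<le> i then M $$ (k, j) else 0)"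
    by (rule sum.cong) (use i in \<open>auto simp: Tmat_index\<close>)
  finally show ?thesis using i by (auto simp: sum.delta)
qed

lemma vmat_mult_index:
  assumes K: "K \<in> carrier_mat q m" and i: "i < (n + 1) * q" and j: "j < m"
  shows "(vmat q n * K) $$ (i, j) = (if i < q then K $$ (i, j) else 0)"
proof -
  have "(vmat q n * K) $$ (i, j) = (\<Sum>k<q. vmat q n $$ (i, k) * K $$ (k, j))"
    using K i j by (simp add: scalar_prod_def atLeast0LessThan)
  also have "\<dots> = (\<Sum>k<q. if k = i then K $$ (k, j) else 0)"
    by (rule sum.cong) (use i in \<open>auto simp: vmat_index\<close>)
  finally show ?thesis by (auto simp: sum.delta)
qed

lemma mult_adjoint_Tmat_index:
  fixes M :: "complex mat"
  assumes M: "M \<in> carrier_mat m ((n + 1) * q)" and i: "i < m" and j: "j < (n + 1) * q"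
  shows "(M * mat_adjoint (Tmat q n)) $$ (i, j) = (if j < q then 0 else M $$ (i, j - q))"
proof -
  have "M * mat_adjoint (Tmat q n) = mat_adjoint (Tmat q n * mat_adjoint M)"
    using M by (simp add: mat_adjoint_mult[OF Tmat_carrier])
  then have "(M * mat_adjoint (Tmat q n)) $$ (i, j) = cnj ((Tmat q n * mat_adjoint M) $$ (j, i))"
    using M i j by simp
  also have "\<dots> = (if j < q then 0 else M $$ (i, j - q))"
    using M i j by (subst Tmat_mult_index[of "mat_adjoint M" n q m]) auto
  finally show ?thesis .
qed

lemma mult_adjoint_vmat_index:
  fixes K :: "complex mat"
  assumes K: "K \<in> carrier_mat m q" and i: "i < m" and j: "j < (n + 1) * q"
  shows "(K * mat_adjoint (vmat q n)) $$ (i, j) = (if j < q then K $$ (i, j) else 0)"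
proof -
  have "K * mat_adjoint (vmat q n) = mat_adjoint (vmat q n * mat_adjoint K)"
    using K by (simp add: mat_adjoint_mult[OF vmat_carrier])
  then have "(K * mat_adjoint (vmat q n)) $$ (i, j) = cnj ((vmat q n * mat_adjoint K) $$ (j, i))"
    using K i j by simp
  also have "\<dots> = (if j < q then K $$ (i, j) else 0)"
    using K i j by (subst vmat_mult_index[of "mat_adjoint K" q m]) auto
  finally show ?thesis .
qed

lemma diff_self_div_mod:
  fixes j q :: nat
  assumes "q \<le> j"
  shows "(j - q) div q = j div q - 1" and "(j - q) mod q = j mod q"
  using assms by (cases "q = 0"; simp add: le_div_geq le_mod_geq)+

lemma Tmat_commutator_index:
  fixes H :: "complex mat"
  assumes H: "H \<in> carrier_mat ((n + 1) * q) ((n + 1) * q)" and i: "i < (n + 1) * q" and j: "j < (n + 1) * q"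
  shows "(Tmat q n * H - H * mat_adjoint (Tmat q n)) $$ (i, j)
    = (if i < q then 0 else H $$ (i - q, j)) - (if j < q then 0 else H $$ (i, j - q))"
proof -
  have "(Tmat q n * H - H * mat_adjoint (Tmat q n)) $$ (i, j)
      = (Tmat q n * H) $$ (i, j) - (H * mat_adjoint (Tmat q n)) $$ (i, j)"
    using H i j by (intro index_minus_mat(1)) auto
  then show ?thesis by (simp only: Tmat_mult_index[OF H i j] mult_adjoint_Tmat_index[OF H i j])
qed

lemma vmat_commutator_index:
  fixes U :: "complex mat"
  assumes U: "U \<in> carrier_mat ((n + 1) * q) q" and i: "i < (n + 1) * q" and j: "j < (n + 1) * q"
  shows "(vmat q n * mat_adjoint U - U * mat_adjoint (vmat q n)) $$ (i, j)
    = (if i < q then cnj (U $$ (j, i)) else 0) - (if j < q then U $$ (i, j) else 0)"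
proof -
  have aU: "mat_adjoint U \<in> carrier_mat q ((n + 1) * q)" using U by simp
  have "(vmat q n * mat_adjoint U - U * mat_adjoint (vmat q n)) $$ (i, j)
      = (vmat q n * mat_adjoint U) $$ (i, j) - (U * mat_adjoint (vmat q n)) $$ (i, j)"
    using U i j by (intro index_minus_mat(1)) auto
  then show ?thesis
    using U j by (simp only: vmat_mult_index[OF aU i j] mult_adjoint_vmat_index[OF U i j]) auto
qed

lemma block_hankel_lyapunov:
  fixes t :: "nat \<Rightarrow> complex mat" and w :: "complex mat"
  assumes t: "\<And>j. j < n \<Longrightarrow> t j \<in> carrier_mat q q \<and> mat_adjoint (t j) = t j"
    and w: "w \<in> carrier_mat q q" "mat_adjoint w = w"
  defines "H \<equiv> blockmat (n + 1) (n + 1) q (\<lambda>j k. t (j + k))"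
    and "U \<equiv> blockmat (n + 1) 1 q (\<lambda>j _. - (if j = 0 then w else t (j - 1)))"
  shows "Tmat q n * H - H * mat_adjoint (Tmat q n) = vmat q n * mat_adjoint U - U * mat_adjoint (vmat q n)"
proof (rule eq_matI)
  let ?N = "(n + 1) * q"
  have H: "H \<in> carrier_mat ?N ?N" and U: "U \<in> carrier_mat ?N q"
    unfolding H_def U_def using blockmat_carrier[of "n + 1" 1 q] by auto
  fix i j
  assume "i < dim_row (vmat q n * mat_adjoint U - U * mat_adjoint (vmat q n))"
    "j < dim_col (vmat q n * mat_adjoint U - U * mat_adjoint (vmat q n))"
  then have i: "i < ?N" and j: "j < ?N" using U by auto
  then have q: "0 < q" by (cases q) auto
  have t_block: "t (k div q - 1) \<in> carrier_mat q q \<and> mat_adjoint (t (k div q - 1)) = t (k div q - 1)"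
    if "q \<le> k" "k < ?N" for k
  proof -
    have "k div q < n + 1" using \<open>k < ?N\<close> by (rule less_mult_imp_div_less)
    moreover have "0 < k div q" using that q by (simp add: div_greater_zero_iff)
    ultimately show ?thesis using t[of "k div q - 1"] by simp
  qed
  have U_index: "U $$ (k, l) = - ((if k < q then w else t (k div q - 1)) $$ (k mod q, l))"
    if "k < ?N" "l < q" for k l
    using that t_block[of k] w q by (auto simp: U_def div_eq_0_iff)
  note idx = Tmat_commutator_index[OF H i j] vmat_commutator_index[OF U i j]
  show "(Tmat q n * H - H * mat_adjoint (Tmat q n)) $$ (i, j)
      = (vmat q n * mat_adjoint U - U * mat_adjoint (vmat q n)) $$ (i, j)"
  proof (cases "i < q"; cases "j < q")
    assume "i < q" "j < q"
    then show ?thesis unfolding idx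
      using U_index[OF i] U_index[OF j] hermitian_index_cnj[OF w(2,1)] by simp
  next
    assume "i < q" "\<not> j < q"
    then show ?thesis unfolding idx
      using U_index[OF j] t_block[OF _ j] hermitian_index_cnj[of "t (j div q - 1)" q "j mod q" i] q j
      by (simp add: H_def diff_self_div_mod)
  next
    assume "\<not> i < q" "j < q"
    then show ?thesis unfolding idx
      using U_index[OF i] q i by (simp add: H_def diff_self_div_mod)
  next
    assume "\<not> i < q" "\<not> j < q"
    moreover have "0 < i div q" "0 < j div q" using calculation q by (simp_all add: div_greater_zero_iff)
    ultimately have "(i - q) div q + j div q = i div q + (j - q) div q"
      by (simp add: diff_self_div_mod)
    then show ?thesis unfolding idx
      using i j \<open>\<not> i < q\<close> \<open>\<not> j < q\<close> by (simp add: H_def diff_self_div_mod(2))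
  qed
qed (simp_all add: H_def U_def)

lemma mat_inverse_one_minus_smult_strictly_lower:
  fixes T :: "'a :: field mat"
  assumes T: "T \<in> carrier_mat n n" and lower: "\<And>i j. i \<le> j \<Longrightarrow> j < n \<Longrightarrow> T $$ (i, j) = 0"
  obtains R where "mat_inverse (1\<^sub>m n - c \<cdot>\<^sub>m T) = Some R" "R \<in> carrier_mat n n"
    "R * (1\<^sub>m n - c \<cdot>\<^sub>m T) = 1\<^sub>m n" "(1\<^sub>m n - c \<cdot>\<^sub>m T) * R = 1\<^sub>m n"
proof -
  define A where "A = 1\<^sub>m n - c \<cdot>\<^sub>m T"
  have A: "A \<in> carrier_mat n n" using T by (simp add: A_def)
  have "det A = prod_list (diag_mat A)"
    by (rule det_lower_triangular[OF _ A]) (use T lower in \<open>simp add: A_def\<close>)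
  also have "diag_mat A = replicate n 1"
    using T lower by (intro nth_equalityI) (auto simp: A_def diag_mat_def)
  finally have "det A \<noteq> 0" by simp
  then have "A \<in> Units (ring_mat TYPE('a) n n)" by (rule det_non_zero_imp_unit[OF A])
  then obtain R where "mat_inverse A = Some R"
    using mat_inverse(1)[OF A] by fastforce
  with mat_inverse(2)[OF A this] that show ?thesis by (simp add: A_def)
qed

lemma RT_inverse:
  shows RT_carrier: "RT q n z \<in> carrier_mat ((n + 1) * q) ((n + 1) * q)"
    and RT_left_inverse: "RT q n z * (1\<^sub>m ((n + 1) * q) - z \<cdot>\<^sub>m Tmat q n) = 1\<^sub>m ((n + 1) * q)"
    and RT_right_inverse: "(1\<^sub>m ((n + 1) * q) - z \<cdot>\<^sub>m Tmat q n) * RT q n z = 1\<^sub>m ((n + 1) * q)"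
proof -
  have "Tmat q n $$ (i, k) = 0" if "i \<le> k" "k < (n + 1) * q" for i k
    using that by (cases q) (simp_all add: Tmat_index)
  then obtain R where "mat_inverse (1\<^sub>m ((n + 1) * q) - z \<cdot>\<^sub>m Tmat q n) = Some R"
    "R \<in> carrier_mat ((n + 1) * q) ((n + 1) * q)" "R * (1\<^sub>m ((n + 1) * q) - z \<cdot>\<^sub>m Tmat q n) = 1\<^sub>m ((n + 1) * q)"
    "(1\<^sub>m ((n + 1) * q) - z \<cdot>\<^sub>m Tmat q n) * R = 1\<^sub>m ((n + 1) * q)"
    by (rule mat_inverse_one_minus_smult_strictly_lower[OF Tmat_carrier])
  then show "RT q n z \<in> carrier_mat ((n + 1) * q) ((n + 1) * q)"
    "RT q n z * (1\<^sub>m ((n + 1) * q) - z \<cdot>\<^sub>m Tmat q n) = 1\<^sub>m ((n + 1) * q)"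
    "(1\<^sub>m ((n + 1) * q) - z \<cdot>\<^sub>m Tmat q n) * RT q n z = 1\<^sub>m ((n + 1) * q)"
    by (simp_all add: RT_def)
qed

lemma fmi_block_RT_conj_congruence:
  fixes H u a :: "complex mat"
  assumes H: "H \<in> carrier_mat ((n + 1) * q) ((n + 1) * q)" and u: "u \<in> carrier_mat ((n + 1) * q) q"
    and a: "a \<in> carrier_mat q q"
    and lyapunov: "Tmat q n * H - H * mat_adjoint (Tmat q n) = vmat q n * mat_adjoint u - u * mat_adjoint (vmat q n)"
    and z: "z \<noteq> cnj z"
  shows "\<exists>X \<in> carrier_mat ((n + 2) * q) ((n + 2) * q).
    fmi_block H (RT q n z) (vmat q n) u (mat_adjoint a) z
      = X * fmi_block H (RT q n (cnj z)) (vmat q n) u a (cnj z) * mat_adjoint X"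
proof
  let ?N = "(n + 1) * q"
  let ?X = "four_block_mat (RT q n z * (1\<^sub>m ?N - cnj z \<cdot>\<^sub>m Tmat q n)) (RT q n z * ((z - cnj z) \<cdot>\<^sub>m vmat q n))
    (0\<^sub>m q ?N) (1\<^sub>m q)"
  have "?X \<in> carrier_mat (?N + q) (?N + q)"
    using RT_carrier[of q n z] by (intro four_block_carrier_mat) auto
  moreover have "?N + q = (n + 2) * q" by (simp add: algebra_simps)
  ultimately show "?X \<in> carrier_mat ((n + 2) * q) ((n + 2) * q)" by metis
  show "fmi_block H (RT q n z) (vmat q n) u (mat_adjoint a) z
      = ?X * fmi_block H (RT q n (cnj z)) (vmat q n) u a (cnj z) * mat_adjoint ?X"
    by (rule fmi_block_conj_congruence[OF H Tmat_carrier vmat_carrier u a RT_carrier RT_left_inverse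
          RT_carrier RT_right_inverse lyapunov z])
qed

section \<open>The matrices P_k\<close>

lemma Pmat_even:
  "Pmat q \<alpha> s f (2 * int n) z
    = fmi_block (Hmat q s n) (RT q n z) (vmat q n) (umat q s n) (f z) z"
  by (simp add: Pmat_def fmi_block_def Let_def nat_mult_distrib)

lemma Pmat_odd:
  "Pmat q \<alpha> s f (2 * int n + 1) z
    = fmi_block (Halpha q \<alpha> s n) (RT q n z) (vmat q n)
        ((- complex_of_real \<alpha>) \<cdot>\<^sub>m umat q s n - y0 q s n) ((z - complex_of_real \<alpha>) \<cdot>\<^sub>m f z) z"
  by (simp add: Pmat_def fmi_block_def Let_def nat_add_distrib nat_mult_distrib)

lemma Pmat_minus_one_fvee:
  assumes "f (cnj z) \<in> carrier_mat q q"
  shows "Pmat q \<alpha> s (fvee f) (-1) z = Pmat q \<alpha> s f (-1) (cnj z)"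
proof (rule eq_matI)
  have swap: "(x - y) / (w1 - w2) = (y - x) / (w2 - w1)" for x y w1 w2 :: complex
    by (metis minus_diff_eq minus_divide_divide)
  show "Pmat q \<alpha> s (fvee f) (-1) z $$ (i, j) = Pmat q \<alpha> s f (-1) (cnj z) $$ (i, j)"
    if "i < dim_row (Pmat q \<alpha> s f (-1) (cnj z))" "j < dim_col (Pmat q \<alpha> s f (-1) (cnj z))" for i j
  proof -
    have "i < q" "j < q" using that assms by (simp_all add: Pmat_def)
    then show ?thesis
      using assms by (simp add: Pmat_def fvee_def mat_adjoint_smult) (rule swap)
  qed
qed (use assms in \<open>simp_all add: Pmat_def fvee_def\<close>)

(* Reading s_{alpha|>(-1)} as s_0, -alpha u_n - y_{0,n} is the column u_n built from the
   shifted sequence s_{alpha|>j}, so the odd case reduces to the Lyapunov identity as well. *)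
lemma smult_umat_minus_y0_eq:
  assumes s: "\<And>j. j \<le> n \<Longrightarrow> s j \<in> carrier_mat q q"
  shows "(- complex_of_real \<alpha>) \<cdot>\<^sub>m umat q s n - y0 q s n
    = blockmat (n + 1) 1 q (\<lambda>j _. - (if j = 0 then s 0 else salpha \<alpha> s (j - 1)))"
proof (rule eq_matI)
  fix i j
  assume "i < dim_row (blockmat (n + 1) 1 q (\<lambda>j _. - (if j = 0 then s 0 else salpha \<alpha> s (j - 1))))"
    "j < dim_col (blockmat (n + 1) 1 q (\<lambda>j _. - (if j = 0 then s 0 else salpha \<alpha> s (j - 1))))"
  then have i: "i < (n + 1) * q" and j: "j < q" by auto
  define k where "k = i div q"
  have "k < n + 1" unfolding k_def using i by (rule less_mult_imp_div_less)
  then have sk: "s k \<in> carrier_mat q q" "s (k - 1) \<in> carrier_mat q q" using s by auto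
  have im: "i mod q < q" using j by simp
  have "j div q = 0" "j mod q = j" using j by simp_all
  then have entries: "umat q s n $$ (i, j) = - (sprev q s k $$ (i mod q, j))"
      "y0 q s n $$ (i, j) = s k $$ (i mod q, j)"
      "blockmat (n + 1) 1 q (\<lambda>j _. - (if j = 0 then s 0 else salpha \<alpha> s (j - 1))) $$ (i, j)
        = - ((if k = 0 then s 0 else salpha \<alpha> s (k - 1)) $$ (i mod q, j))"
    using i j im sk by (auto simp: umat_def y0_def sprev_def salpha_def k_def)
  have "((- complex_of_real \<alpha>) \<cdot>\<^sub>m umat q s n - y0 q s n) $$ (i, j)
      = - complex_of_real \<alpha> * umat q s n $$ (i, j) - y0 q s n $$ (i, j)"
    using i j umat_carrier[of q s n] y0_carrier[of q s n] by (simp add: carrier_matD)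
  also have "\<dots> = - ((if k = 0 then s 0 else salpha \<alpha> s (k - 1)) $$ (i mod q, j))"
    unfolding entries(1,2) using sk im j by (cases "k = 0") (auto simp: sprev_def salpha_def)
  finally show "((- complex_of_real \<alpha>) \<cdot>\<^sub>m umat q s n - y0 q s n) $$ (i, j)
    = blockmat (n + 1) 1 q (\<lambda>j _. - (if j = 0 then s 0 else salpha \<alpha> s (j - 1))) $$ (i, j)"
    unfolding entries(3) .
qed (simp_all add: umat_def y0_def)

lemma Pmat_even_fvee_congruence:
  assumes s: "\<And>j. j < n \<Longrightarrow> s j \<in> carrier_mat q q \<and> mat_adjoint (s j) = s j"
    and a: "f (cnj z) \<in> carrier_mat q q" and z: "z \<noteq> cnj z"
  shows "\<exists>X \<in> carrier_mat (dimP q (2 * int n)) (dimP q (2 * int n)).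
    Pmat q \<alpha> s (fvee f) (2 * int n) z = X * Pmat q \<alpha> s f (2 * int n) (cnj z) * mat_adjoint X"
proof -
  have "Tmat q n * Hmat q s n - Hmat q s n * mat_adjoint (Tmat q n)
      = vmat q n * mat_adjoint (umat q s n) - umat q s n * mat_adjoint (vmat q n)"
    unfolding Hmat_def umat_def sprev_def by (rule block_hankel_lyapunov) (use s in auto)
  moreover have "dimP q (2 * int n) = (n + 2) * q" by (simp add: dimP_def nat_mult_distrib)
  ultimately show ?thesis
    unfolding Pmat_even fvee_def using fmi_block_RT_conj_congruence[OF Hmat_carrier umat_carrier a _ z] by simp
qed

lemma Pmat_odd_fvee_congruence:
  assumes s: "\<And>j. j \<le> n \<Longrightarrow> s j \<in> carrier_mat q q \<and> mat_adjoint (s j) = s j"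
    and a: "f (cnj z) \<in> carrier_mat q q" and z: "z \<noteq> cnj z"
  shows "\<exists>X \<in> carrier_mat (dimP q (2 * int n + 1)) (dimP q (2 * int n + 1)).
    Pmat q \<alpha> s (fvee f) (2 * int n + 1) z = X * Pmat q \<alpha> s f (2 * int n + 1) (cnj z) * mat_adjoint X"
proof -
  define u where "u = (- complex_of_real \<alpha>) \<cdot>\<^sub>m umat q s n - y0 q s n"
  define b where "b = (cnj z - complex_of_real \<alpha>) \<cdot>\<^sub>m f (cnj z)"
  have u: "u \<in> carrier_mat ((n + 1) * q) q" using umat_carrier y0_carrier by (simp add: u_def)
  have b: "b \<in> carrier_mat q q" using a by (simp add: b_def)
  have salpha: "salpha \<alpha> s j \<in> carrier_mat q q \<and> mat_adjoint (salpha \<alpha> s j) = salpha \<alpha> s j" if "j < n" for j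
    using s[of j] s[of "j + 1"] that by (simp add: salpha_def mat_adjoint_add[of _ q q] mat_adjoint_smult)
  have "u = blockmat (n + 1) 1 q (\<lambda>j _. - (if j = 0 then s 0 else salpha \<alpha> s (j - 1)))"
    unfolding u_def by (rule smult_umat_minus_y0_eq) (use s in blast)
  then have "Tmat q n * Halpha q \<alpha> s n - Halpha q \<alpha> s n * mat_adjoint (Tmat q n)
      = vmat q n * mat_adjoint u - u * mat_adjoint (vmat q n)"
    unfolding Halpha_def by (simp only:) (rule block_hankel_lyapunov, use s salpha in auto)
  note congruence = fmi_block_RT_conj_congruence[OF Halpha_carrier u b this z]
  have "(z - complex_of_real \<alpha>) \<cdot>\<^sub>m fvee f z = mat_adjoint b"
    by (simp add: b_def fvee_def mat_adjoint_smult)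
  moreover have "dimP q (2 * int n + 1) = (n + 2) * q" by (simp add: dimP_def nat_add_distrib nat_mult_distrib)
  ultimately show ?thesis
    using congruence unfolding Pmat_odd u_def[symmetric] b_def[symmetric] by simp
qed

lemma int_cases_minus_one_even_odd:
  fixes k :: int
  assumes "-1 \<le> k"
  obtains (minus_one) "k = -1" | (even) n where "k = 2 * int n" | (odd) n where "k = 2 * int n + 1"
proof (cases "k = -1")
  case False
  then have "k = int (nat k)" using assms by simp
  moreover have "nat k = 2 * (nat k div 2) \<or> nat k = 2 * (nat k div 2) + 1" by auto
  ultimately show ?thesis using that(2,3) by (metis of_nat_add of_nat_mult of_nat_numeral of_nat_1)
qed (rule that(1))

theorem lemma4p8:
  fixes \<alpha> :: real and \<kappa> :: enat and q :: nat and s :: "nat \<Rightarrow> complex mat"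
    and G :: "complex set" and f :: "complex \<Rightarrow> complex mat" and k :: int and z :: complex
  assumes s: "\<forall>j. enat j \<le> \<kappa> \<longrightarrow> s j \<in> carrier_mat q q \<and> mat_adjoint (s j) = s j"
    and G: "G - \<real> \<noteq> {}"
    and f: "\<forall>w\<in>G. f w \<in> carrier_mat q q"
    and k: "-1 \<le> k" "k = -1 \<or> enat (nat k) \<le> \<kappa>"
    and z: "z \<in> Gvee G - \<real>"
  shows "\<exists>X \<in> carrier_mat (dimP q k) (dimP q k).
           Pmat q \<alpha> s (fvee f) k z = X * Pmat q \<alpha> s f k (cnj z) * mat_adjoint X"
proof -
  have a: "f (cnj z) \<in> carrier_mat q q" using f z by (simp add: Gvee_def)
  have z_nonreal: "z \<noteq> cnj z" using z by (auto simp: Reals_cnj_iff)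
  have s_upto: "s j \<in> carrier_mat q q \<and> mat_adjoint (s j) = s j" if "j \<le> nat k" "k \<noteq> -1" for j
    using s k that by (meson enat_ord_simps(1) order_trans)
  from k(1) show ?thesis
  proof (cases rule: int_cases_minus_one_even_odd)
    case minus_one
    have "Pmat q \<alpha> s f k (cnj z) \<in> carrier_mat q q" using a minus_one by (simp add: Pmat_def)
    then show ?thesis
      using minus_one Pmat_minus_one_fvee[where f = f and z = z, OF a] by (intro bexI[of _ "1\<^sub>m q"]) (simp_all add: dimP_def)
  next
    case (even n)
    then have "s j \<in> carrier_mat q q \<and> mat_adjoint (s j) = s j" if "j < n" for j
      using s_upto[of j] that by (simp add: nat_mult_distrib)
    from Pmat_even_fvee_congruence[where f = f and z = z, OF this a z_nonreal] show ?thesis by (simp only: even)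
  next
    case (odd n)
    then have "s j \<in> carrier_mat q q \<and> mat_adjoint (s j) = s j" if "j \<le> n" for j
      using s_upto[of j] that by (simp add: nat_add_distrib nat_mult_distrib)
    from Pmat_odd_fvee_congruence[where f = f and z = z, OF this a z_nonreal] show ?thesis by (simp only: odd)
  qed
qed

end
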